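(* Let $M$ be the monoid (algebra in sets) generated by $a,b,d,e,f,h,i,j,k,l,n,o,p$ subject to the relations $ba=ed$, $ea=fb$, $hb=id$, $jb=kd$, $oi=pk$, $ej=ph$, $le=ek=pi$, $nf=oh=pj$. Then, for any PBW basis of the associated linear algebra (given as the normal forms of a convergent rewriting system orienting the defining relations), the partition posets associated with $M$ admit no CL-labelling making them CL-shellable, compatible with isomorphisms of subposets, and such that the minimal chains for the CL-labelling correspond to the PBW elements. In particular, the converse of the statement "a quadratic basic-set operad whose partition posets admit CL-labellings compatible with isomorphisms of subposets admits a PBW basis" is false.
   Context: For an algebra in sets (monoid) presented by generators $E$ and homogeneous relations, the partition poset $\Pi^{(d)}$ has as elements the elements of weight at most $d$ lying below some element of weight $d$, with $x\le y$ iff $y=zx$ for some $z$; covering edges are labelled by the generator multiplied on the left, and a chain read bottom-to-top gives a word read right-to-left. For $\lambda\le\omega$, $\delta_\lambda^\omega$ is the element $z$ with $\omega=z\lambda$; two interval subposets are isomorphic if there is a poset isomorphism $g$ between them with $\delta_{g(\lambda)}^{g(\omega)}=\delta_\lambda^\omega$ for every covering $\lambda\prec\omega$. A chain-edge labelling assigns to each pair (maximal chain, covering edge on it) a label in a poset, maximal chains agreeing on bottom edges having the same labels there; it is a CL-labelling if in each rooted interval there is a unique maximal chain with strictly increasing labels, lexicographically preceding all other maximal chains. CL-labellings on all $\Pi^{(d)}$ are compatible with isomorphisms of subposets if every isomorphism of subposets induces a map on labels sending increasing chains to increasing chains, non-increasing to non-increasing, and preserving the lexicographic preorder on chains. *)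

theory Defs
  imports Main
begin

datatype gen = ga | gb | gd | ge | gf | gh | gi | gj | gk | gl | gn | go | gp

type_synonym word = "gen list"

definition defrel :: "(word \<times> word) set" where
  "defrel = {([gb,ga],[ge,gd]), ([ge,ga],[gf,gb]), ([gh,gb],[gi,gd]), ([gj,gb],[gk,gd]), ([go,gi],[gp,gk]),
             ([ge,gj],[gp,gh]), ([gl,ge],[ge,gk]), ([ge,gk],[gp,gi]), ([gn,gf],[go,gh]), ([go,gh],[gp,gj])}"

definition rstep :: "(word \<times> word) set \<Rightarrow> word \<Rightarrow> word \<Rightarrow> bool" where
  "rstep R u v \<longleftrightarrow> (\<exists>x y lhs rhs. (lhs, rhs) \<in> R \<and> u = x @ lhs @ y \<and> v = x @ rhs @ y)"

definition eqw :: "word \<Rightarrow> word \<Rightarrow> bool" where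
  "eqw = (sup (rstep defrel) (rstep defrel)\<inverse>\<inverse>)\<^sup>*\<^sup>*"

type_synonym elem = "word set"

definition cls :: "word \<Rightarrow> elem" where
  "cls w = {v. eqw w v}"

definition Melems :: "elem set" where
  "Melems = range cls"

definition isprod :: "elem \<Rightarrow> elem \<Rightarrow> elem \<Rightarrow> bool" where
  "isprod z x y \<longleftrightarrow> (\<exists>u v. z = cls u \<and> x = cls v \<and> y = cls (u @ v))"

definition Mle :: "elem \<Rightarrow> elem \<Rightarrow> bool" where
  "Mle x y \<longleftrightarrow> (\<exists>z. isprod z x y)"

definition Mless :: "elem \<Rightarrow> elem \<Rightarrow> bool" where
  "Mless x y \<longleftrightarrow> Mle x y \<and> x \<noteq> y"

definition has_weight :: "elem \<Rightarrow> nat \<Rightarrow> bool" where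
  "has_weight x m \<longleftrightarrow> (\<exists>w. x = cls w \<and> length w = m)"

definition Pi :: "nat \<Rightarrow> elem set" where
  "Pi dd = {x. (\<exists>m\<le>dd. has_weight x m) \<and> (\<exists>y. has_weight y dd \<and> Mle x y)}"

definition bot :: elem where
  "bot = cls []"

definition covers :: "elem set \<Rightarrow> elem \<Rightarrow> elem \<Rightarrow> bool" where
  "covers P x y \<longleftrightarrow> x \<in> P \<and> y \<in> P \<and> Mless x y \<and> \<not> (\<exists>z\<in>P. Mless x z \<and> Mless z y)"

definition cchain :: "elem set \<Rightarrow> elem \<Rightarrow> elem \<Rightarrow> elem list \<Rightarrow> bool" where
  "cchain P x y c \<longleftrightarrow> c \<noteq> [] \<and> hd c = x \<and> last c = y \<and>
     (\<forall>q. Suc q < length c \<longrightarrow> covers P (c ! q) (c ! Suc q))"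

definition maxchain :: "elem set \<Rightarrow> elem list \<Rightarrow> bool" where
  "maxchain P c \<longleftrightarrow> c \<noteq> [] \<and> hd c \<in> P \<and> last c \<in> P \<and>
     \<not> (\<exists>z\<in>P. Mless z (hd c)) \<and> \<not> (\<exists>z\<in>P. Mless (last c) z) \<and>
     (\<forall>q. Suc q < length c \<longrightarrow> covers P (c ! q) (c ! Suc q))"

definition chain_edge_labelling :: "elem set \<Rightarrow> (elem list \<Rightarrow> nat \<Rightarrow> 'l) \<Rightarrow> bool" where
  "chain_edge_labelling P lab \<longleftrightarrow>
     (\<forall>c c' q. maxchain P c \<and> maxchain P c' \<and> Suc q < length c \<and> Suc q < length c' \<and>
        take (Suc (Suc q)) c = take (Suc (Suc q)) c' \<longrightarrow> lab c q = lab c' q)"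

text \<open>Labels of a maximal chain c of [x,y] in the rooted interval with root r
 (r a maximal chain of [bot,x]): read off any maximal chain of P extending r followed by c.\<close>
definition rlabs :: "elem set \<Rightarrow> (elem list \<Rightarrow> nat \<Rightarrow> 'l) \<Rightarrow> elem list \<Rightarrow> elem list \<Rightarrow> 'l list" where
  "rlabs P lab r c =
     (let m = (SOME m. maxchain P m \<and> take (length r + length c - 1) m = r @ tl c)
      in map (\<lambda>q. lab m (length r - 1 + q)) [0..<length c - 1])"

definition lexless :: "'l::order list \<Rightarrow> 'l list \<Rightarrow> bool" where
  "lexless s t \<longleftrightarrow> (\<exists>q < min (length s) (length t). take q s = take q t \<and> s ! q < t ! q)"

definition lexle :: "'l::order list \<Rightarrow> 'l list \<Rightarrow> bool" where
  "lexle s t \<longleftrightarrow> s = t \<or> lexless s t"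

definition increasing :: "'l::order list \<Rightarrow> bool" where
  "increasing s \<longleftrightarrow> sorted_wrt (<) s"

definition CL_labelling :: "elem set \<Rightarrow> (elem list \<Rightarrow> nat \<Rightarrow> 'l::order) \<Rightarrow> bool" where
  "CL_labelling P lab \<longleftrightarrow> chain_edge_labelling P lab \<and>
     (\<forall>x y r. x \<in> P \<and> y \<in> P \<and> Mle x y \<and> cchain P bot x r \<longrightarrow>
        (\<exists>!c. cchain P x y c \<and> increasing (rlabs P lab r c)) \<and>
        (\<forall>c c'. cchain P x y c \<and> increasing (rlabs P lab r c) \<and> cchain P x y c' \<and> c' \<noteq> c
            \<longrightarrow> lexless (rlabs P lab r c) (rlabs P lab r c')))"

definition interval :: "elem set \<Rightarrow> elem \<Rightarrow> elem \<Rightarrow> elem set" where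
  "interval P x y = {z \<in> P. Mle x z \<and> Mle z y}"

text \<open>g is an isomorphism of interval subposets [x,y] of P onto [x',y'] of P', preserving
 \<delta> on every covering (the set of z with \<omega> = z\<lambda> is preserved).\<close>
definition subposet_iso ::
  "elem set \<Rightarrow> elem \<Rightarrow> elem \<Rightarrow> elem set \<Rightarrow> elem \<Rightarrow> elem \<Rightarrow> (elem \<Rightarrow> elem) \<Rightarrow> bool" where
  "subposet_iso P x y P' x' y' g \<longleftrightarrow>
     bij_betw g (interval P x y) (interval P' x' y') \<and>
     (\<forall>u\<in>interval P x y. \<forall>v\<in>interval P x y. Mle u v \<longleftrightarrow> Mle (g u) (g v)) \<and>
     (\<forall>u\<in>interval P x y. \<forall>v\<in>interval P x y. covers P u v \<longrightarrow>
        (\<forall>z. isprod z u v \<longleftrightarrow> isprod z (g u) (g v)))"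

definition compatible_isos :: "(nat \<Rightarrow> elem list \<Rightarrow> nat \<Rightarrow> 'l::order) \<Rightarrow> bool" where
  "compatible_isos lab \<longleftrightarrow>
     (\<forall>dd dd' x y x' y' g r r'.
        x \<in> Pi dd \<and> y \<in> Pi dd \<and> Mle x y \<and> x' \<in> Pi dd' \<and> y' \<in> Pi dd' \<and> Mle x' y' \<and>
        subposet_iso (Pi dd) x y (Pi dd') x' y' g \<and>
        cchain (Pi dd) bot x r \<and> cchain (Pi dd') bot x' r' \<longrightarrow>
        (\<forall>c. cchain (Pi dd) x y c \<longrightarrow>
           (increasing (rlabs (Pi dd) (lab dd) r c) \<longleftrightarrow>
            increasing (rlabs (Pi dd') (lab dd') r' (map g c)))) \<and>
        (\<forall>c1 c2. cchain (Pi dd) x y c1 \<and> cchain (Pi dd) x y c2 \<longrightarrow>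
           lexle (rlabs (Pi dd) (lab dd) r c1) (rlabs (Pi dd) (lab dd) r c2) \<longrightarrow>
           lexle (rlabs (Pi dd') (lab dd') r' (map g c1)) (rlabs (Pi dd') (lab dd') r' (map g c2))))"

definition convergent_orientation :: "(word \<times> word) set \<Rightarrow> bool" where
  "convergent_orientation R \<longleftrightarrow>
     (\<forall>(x, y)\<in>R. length x = 2 \<and> length y = 2 \<and> x \<noteq> y \<and> eqw x y) \<and>
     (sup (rstep R) (rstep R)\<inverse>\<inverse>)\<^sup>*\<^sup>* = eqw \<and>
     wfP (rstep R)\<inverse>\<inverse> \<and>
     (\<forall>u v w. (rstep R)\<^sup>*\<^sup>* u v \<and> (rstep R)\<^sup>*\<^sup>* u w \<longrightarrow>
        (\<exists>t. (rstep R)\<^sup>*\<^sup>* v t \<and> (rstep R)\<^sup>*\<^sup>* w t))"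

definition irreducible :: "(word \<times> word) set \<Rightarrow> word \<Rightarrow> bool" where
  "irreducible R w \<longleftrightarrow> \<not> (\<exists>v. rstep R w v)"

text \<open>The maximal chain of [bot, cls w] associated with the word w: the word read right to left
 from bottom to top, i.e. the chain of its suffixes.\<close>
definition word_chain :: "word \<Rightarrow> elem list" where
  "word_chain w = map (\<lambda>q. cls (drop (length w - q) w)) [0..<Suc (length w)]"

definition minimal_chains_PBW :: "(word \<times> word) set \<Rightarrow> (nat \<Rightarrow> elem list \<Rightarrow> nat \<Rightarrow> 'l::order) \<Rightarrow> bool" where
  "minimal_chains_PBW R lab \<longleftrightarrow>
     (\<forall>dd w. length w = dd \<and> irreducible R w \<longrightarrow>
        increasing (rlabs (Pi dd) (lab dd) [bot] (word_chain w)))"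

end

theory Submission
  imports Defs "HOL-Library.Confluence"
begin

(* In the partition poset of weight 2, the label of the bottom edge of the chain of a word xy
   depends only on y, because chain-edge labels are determined by the bottom of the chain.
   If xy is a normal form and x'y' represents the same element with y' different from y, then
   the chain of xy is the increasing chain of its interval, and lexicographic minimality forces
   the bottom label of y to be strictly below that of y'. Thus every convergent orientation
   imposes order relations on the bottom labels of a, b, d. On the other hand, confluence forbids
   two distinct words of weight 3 with all two-letter factors in normal form from being equal
   in M; splitting on which of hb = id is the normal form, the identities hed = ida,
   lba = led = ejb = phb, eka = lfb = pia and nea = oid = pkd make these order relations
   cyclic. A convergent orientation exists: orient the relations so that a weight on the
   generators decreases and join the two critical pairs pid and pjb. *)

section \<open>Abstract rewriting\<close>

abbreviation joinable :: "('a \<Rightarrow> 'a \<Rightarrow> bool) \<Rightarrow> 'a \<Rightarrow> 'a \<Rightarrow> bool" where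
  "joinable r u v \<equiv> \<exists>d. r\<^sup>*\<^sup>* u d \<and> r\<^sup>*\<^sup>* v d"

lemma newman:
  assumes wf: "wfP r\<inverse>\<inverse>" and local_confl: "\<And>a b c. r a b \<Longrightarrow> r a c \<Longrightarrow> joinable r b c"
  shows "confluentp r"
proof (rule confluentpI)
  fix a b c assume "r\<^sup>*\<^sup>* a b" "r\<^sup>*\<^sup>* a c"
  with wf show "joinable r b c"
  proof (induction a arbitrary: b c rule: wfp_induct_rule)
    case (less a)
    show ?case
    proof (cases "b = a \<or> c = a")
      case True
      then show ?thesis using less.prems by blast
    next
      case False
      obtain b1 where b1: "r a b1" "r\<^sup>*\<^sup>* b1 b"
        using less.prems(1) False by (metis converse_rtranclpE)
      obtain c1 where c1: "r a c1" "r\<^sup>*\<^sup>* c1 c"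
        using less.prems(2) False by (metis converse_rtranclpE)
      obtain d1 where d1: "r\<^sup>*\<^sup>* b1 d1" "r\<^sup>*\<^sup>* c1 d1"
        using local_confl[OF b1(1) c1(1)] by blast
      obtain d2 where d2: "r\<^sup>*\<^sup>* b d2" "r\<^sup>*\<^sup>* d1 d2"
        using less.IH[of b1 b d1] b1 d1 by auto
      obtain d3 where d3: "r\<^sup>*\<^sup>* c d3" "r\<^sup>*\<^sup>* d2 d3"
        using less.IH[of c1 c d2] c1 d1(2) d2(2) by (auto intro: rtranclp_trans)
      show ?thesis using d2(1) d3 by (blast intro: rtranclp_trans)
    qed
  qed
qed

lemma terminating_normal_form_exists:
  assumes "wfP r\<inverse>\<inverse>"
  shows "\<exists>v. r\<^sup>*\<^sup>* u v \<and> \<not> (\<exists>w. r v w)"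
  using assms
proof (induction u rule: wfp_induct_rule)
  case (less u)
  then show ?case by (metis conversepI converse_rtranclp_into_rtranclp rtranclp.rtrancl_refl)
qed

lemma confluent_normal_form_unique:
  assumes "confluentp r" "equivclp r u v" "\<not> (\<exists>w. r u w)" "\<not> (\<exists>w. r v w)"
  shows "u = v"
proof -
  have "(r\<^sup>*\<^sup>* OO r\<inverse>\<inverse>\<^sup>*\<^sup>*) u v"
    using assms(1,2) semiconfluentp_equivclp confluentp_imp_semiconfluentp by metis
  then obtain d where "r\<^sup>*\<^sup>* u d" "r\<^sup>*\<^sup>* v d" by (auto simp: rtranclp_conversep)
  with assms(3,4) show ?thesis by (metis converse_rtranclpE)
qed

section \<open>String rewriting\<close>

lemma rstep_rule: "(l, r) \<in> D \<Longrightarrow> rstep D l r"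
  unfolding rstep_def by (metis append_Nil append_Nil2)

lemma rstep_in_context: "rstep D u v \<Longrightarrow> rstep D (x @ u @ y) (x @ v @ y)"
  unfolding rstep_def by (metis append.assoc)

lemma rtranclp_rstep_in_context: "(rstep D)\<^sup>*\<^sup>* u v \<Longrightarrow> (rstep D)\<^sup>*\<^sup>* (x @ u @ y) (x @ v @ y)"
  by (induction rule: rtranclp_induct) (auto intro: rtranclp.rtrancl_into_rtrancl rstep_in_context)

lemma equivclp_rstep_in_context: "equivclp (rstep D) u v \<Longrightarrow> equivclp (rstep D) (x @ u @ y) (x @ v @ y)"
  by (induction rule: equivclp_induct) (auto intro: equivclp_into_equivclp rstep_in_context)

lemma equivclp_rstep_mono:
  assumes "\<And>l r. (l, r) \<in> D \<Longrightarrow> equivclp (rstep E) l r" "equivclp (rstep D) u v"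
  shows "equivclp (rstep E) u v"
  using assms(2)
proof (induction rule: equivclp_induct)
  case (step v w)
  have "equivclp (rstep E) v w"
    using step.hyps(2) assms(1)
    by (auto simp: rstep_def intro: equivclp_rstep_in_context equivclp_sym)
  with step.IH show ?case by (rule equivclp_trans)
qed simp

lemma rstep_length:
  "(\<And>l r. (l, r) \<in> D \<Longrightarrow> length l = length r) \<Longrightarrow> rstep D u v \<Longrightarrow> length u = length v"
  unfolding rstep_def by fastforce

lemma rstep_whole_word:
  assumes "\<And>l r. (l, r) \<in> D \<Longrightarrow> length l = length u" "rstep D u v"
  shows "(u, v) \<in> D"
  using assms unfolding rstep_def by fastforce

lemma irreducible_three_letters:
  assumes "\<And>l r. (l, r) \<in> D \<Longrightarrow> length l = 2"
    and "irreducible D [x, y]" "irreducible D [y, z]"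
  shows "irreducible D [x, y, z]"
  unfolding irreducible_def
proof
  assume "\<exists>w. rstep D [x, y, z] w"
  then obtain a b l r where lr: "(l, r) \<in> D" and split: "[x, y, z] = a @ l @ b"
    unfolding rstep_def by blast
  have "l = [x, y] \<or> l = [y, z]"
    using split assms(1)[OF lr] by (cases a) (auto simp: Cons_eq_append_conv numeral_2_eq_2 length_Suc_conv)
  then show False
    using assms(2,3) rstep_rule[OF lr] unfolding irreducible_def by blast
qed

lemma rstep_terminating_by_weight:
  fixes f :: "gen \<Rightarrow> nat"
  assumes "\<And>l r. (l, r) \<in> D \<Longrightarrow> sum_list (map f r) < sum_list (map f l)"
  shows "wfP (rstep D)\<inverse>\<inverse>"
proof (rule wfp_if_convertible_to_nat[of _ "\<lambda>w. sum_list (map f w)"])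
  fix u v assume "(rstep D)\<inverse>\<inverse> u v"
  then obtain x y l r where lr: "(l, r) \<in> D" and "v = x @ l @ y" "u = x @ r @ y"
    unfolding rstep_def by auto
  moreover have "sum_list (map f r) < sum_list (map f l)" using assms lr .
  ultimately show "sum_list (map f u) < sum_list (map f v)" by simp
qed

lemma rstep_left_pair: "([p, q], [p', q']) \<in> D \<Longrightarrow> rstep D [p, q, s] [p', q', s]"
  using rstep_in_context[OF rstep_rule, of "[p, q]" "[p', q']" D "[]" "[s]"] by simp

lemma rstep_right_pair: "([p, q], [p', q']) \<in> D \<Longrightarrow> rstep D [s, p, q] [s, p', q']"
  using rstep_in_context[OF rstep_rule, of "[p, q]" "[p', q']" D "[s]" "[]"] by simp

lemma joinable_in_context:
  "joinable (rstep D) u v \<Longrightarrow> joinable (rstep D) (x @ u @ y) (x @ v @ y)"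
  using rtranclp_rstep_in_context by blast

lemma joinable_overlapping_steps:
  assumes lhs: "\<And>l r. (l, r) \<in> D \<Longrightarrow> length l = 2"
    and same_lhs: "\<And>l r1 r2. (l, r1) \<in> D \<Longrightarrow> (l, r2) \<in> D \<Longrightarrow> joinable (rstep D) r1 r2"
    and overlap: "\<And>p q s r1 r2. ([p, q], r1) \<in> D \<Longrightarrow> ([q, s], r2) \<in> D \<Longrightarrow>
                    joinable (rstep D) (r1 @ [s]) (p # r2)"
    and r1: "(l1, r1) \<in> D" and r2: "(l2, r2) \<in> D" and eq: "l1 @ y1 = us @ l2 @ y2"
  shows "joinable (rstep D) (x @ r1 @ y1) (x @ us @ r2 @ y2)"
proof -
  obtain p q where l1: "l1 = [p, q]"
    using lhs[OF r1] by (auto simp: numeral_2_eq_2 length_Suc_conv)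
  obtain q' s where l2: "l2 = [q', s]"
    using lhs[OF r2] by (auto simp: numeral_2_eq_2 length_Suc_conv)
  consider "us = []" | "us = [p]" | mm where "us = [p, q] @ mm"
  proof (cases us)
    case (Cons c us')
    with eq l1 have "c = p" "q # y1 = us' @ l2 @ y2" by auto
    with Cons that show ?thesis by (cases us') auto
  qed simp
  then show ?thesis
  proof cases
    case 1
    then show ?thesis using eq l1 l2 joinable_in_context[OF same_lhs[OF r1]] r2 by auto
  next
    case 2
    then have "q' = q" "y1 = s # y2" using eq l1 l2 by auto
    then show ?thesis
      using 2 joinable_in_context[OF overlap[OF r1[unfolded l1] r2[unfolded l2 \<open>q' = q\<close>]], of x y2]
      by simp
  next
    case 3
    then have y1: "y1 = mm @ l2 @ y2" using eq l1 by simp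
    have "rstep D (x @ r1 @ y1) (x @ r1 @ mm @ r2 @ y2)"
      using rstep_in_context[OF rstep_rule[OF r2], of "x @ r1 @ mm" y2] y1 by simp
    moreover have "rstep D (x @ us @ r2 @ y2) (x @ r1 @ mm @ r2 @ y2)"
      using rstep_in_context[OF rstep_rule[OF r1], of x "mm @ r2 @ y2"] 3 l1 by simp
    ultimately show ?thesis by blast
  qed
qed

lemma critical_pair_lemma_length2:
  assumes lhs: "\<And>l r. (l, r) \<in> D \<Longrightarrow> length l = 2"
    and same_lhs: "\<And>l r1 r2. (l, r1) \<in> D \<Longrightarrow> (l, r2) \<in> D \<Longrightarrow> joinable (rstep D) r1 r2"
    and overlap: "\<And>p q s r1 r2. ([p, q], r1) \<in> D \<Longrightarrow> ([q, s], r2) \<in> D \<Longrightarrow>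
                    joinable (rstep D) (r1 @ [s]) (p # r2)"
    and "rstep D u v" "rstep D u w"
  shows "joinable (rstep D) v w"
proof -
  have left_first: "joinable (rstep D) (x @ r1 @ y1) (x @ us @ r2 @ y2)"
    if "(l1, r1) \<in> D" "(l2, r2) \<in> D" "l1 @ y1 = us @ l2 @ y2" for x l1 r1 y1 us l2 r2 y2
    by (rule joinable_overlapping_steps[of D]) (fact lhs same_lhs overlap that)+
  obtain x1 l1 r1 y1 x2 l2 r2 y2 where
    r1: "(l1, r1) \<in> D" "u = x1 @ l1 @ y1" "v = x1 @ r1 @ y1" and
    r2: "(l2, r2) \<in> D" "u = x2 @ l2 @ y2" "w = x2 @ r2 @ y2"
    using assms(4,5) unfolding rstep_def by blast
  from r1(2) r2(2) obtain us where
    "x2 = x1 @ us \<and> l1 @ y1 = us @ l2 @ y2 \<or> x1 = x2 @ us \<and> us @ l1 @ y1 = l2 @ y2"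
    using append_eq_append_conv2[of x1 "l1 @ y1" x2 "l2 @ y2"] by auto
  then show ?thesis
  proof
    assume "x2 = x1 @ us \<and> l1 @ y1 = us @ l2 @ y2"
    then show ?thesis using left_first[OF r1(1) r2(1), of y1 us y2 x1] r1(3) r2(3) by simp
  next
    assume "x1 = x2 @ us \<and> us @ l1 @ y1 = l2 @ y2"
    then show ?thesis using left_first[OF r2(1) r1(1) sym, of us y1 y2 x2] r1(3) r2(3) by auto
  qed
qed

section \<open>The monoid M\<close>

lemma eqw_equivclp: "eqw = equivclp (rstep defrel)"
  unfolding eqw_def equivclp_def symclp_pointfree ..

lemma defrel_lengths: "(l, r) \<in> defrel \<Longrightarrow> length l = 2 \<and> length r = 2"
  by (auto simp: defrel_def)

lemma eqw_refl: "eqw u u"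
  by (simp add: eqw_equivclp)

lemma eqw_sym: "eqw u v \<Longrightarrow> eqw v u"
  unfolding eqw_equivclp by (rule equivclp_sym)

lemma eqw_trans [trans]: "eqw u v \<Longrightarrow> eqw v w \<Longrightarrow> eqw u w"
  unfolding eqw_equivclp by (rule equivclp_trans)

lemma eqw_relation: "(l, r) \<in> defrel \<or> (r, l) \<in> defrel \<Longrightarrow> eqw (x @ l @ y) (x @ r @ y)"
  unfolding eqw_equivclp by (auto intro: equivclp_rstep_in_context rstep_rule)

lemma eqw_defrel: "(u, v) \<in> defrel \<or> (v, u) \<in> defrel \<Longrightarrow> eqw u v"
  using eqw_relation[of u v "[]" "[]"] by simp

lemma rstep_defrel_length: "rstep defrel u v \<Longrightarrow> length u = length v"
  by (rule rstep_length[of defrel]) (simp_all add: defrel_lengths)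

lemma rstep_defrel_long: "rstep defrel u v \<Longrightarrow> 2 \<le> length u"
  unfolding rstep_def by (auto dest!: defrel_lengths)

lemma eqw_length: "eqw u v \<Longrightarrow> length u = length v"
  unfolding eqw_equivclp
  by (induction rule: equivclp_induct) (auto dest: rstep_defrel_length)

lemma eqw_closed_length2:
  assumes closed: "\<And>u v. u \<in> S \<Longrightarrow> (u, v) \<in> defrel \<or> (v, u) \<in> defrel \<Longrightarrow> v \<in> S"
    and length2: "\<And>u. u \<in> S \<Longrightarrow> length u = 2"
    and "u \<in> S" "eqw u v"
  shows "v \<in> S"
  using assms(4,3) unfolding eqw_equivclp
proof (induction rule: equivclp_induct)
  case (step v w)
  have "(v, w) \<in> defrel \<or> (w, v) \<in> defrel"
    using step.hyps(2) step.IH[OF step.prems] length2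
    by (metis defrel_lengths rstep_defrel_length rstep_whole_word)
  then show ?case using closed step.IH[OF step.prems] by blast
qed

lemma eqw_short: "eqw u v \<Longrightarrow> length u < 2 \<Longrightarrow> v = u"
  unfolding eqw_equivclp
  by (induction rule: equivclp_induct) (metis rstep_defrel_long rstep_defrel_length not_le)+

lemma cls_eq_iff: "cls u = cls v \<longleftrightarrow> eqw u v"
  unfolding cls_def using eqw_refl eqw_sym eqw_trans by blast

lemma cls_length: "cls u = cls v \<Longrightarrow> length u = length v"
  by (simp add: cls_eq_iff eqw_length)

lemma eqw_left: "([p, q], [p', q']) \<in> defrel \<or> ([p', q'], [p, q]) \<in> defrel \<Longrightarrow> eqw [p, q, s] [p', q', s]"
  using eqw_relation[of "[p, q]" "[p', q']" "[]" "[s]"] by simp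

lemma eqw_right: "([p, q], [p', q']) \<in> defrel \<or> ([p', q'], [p, q]) \<in> defrel \<Longrightarrow> eqw [s, p, q] [s, p', q']"
  using eqw_relation[of "[p, q]" "[p', q']" "[s]" "[]"] by simp

lemma eqw_hed_ida: "eqw [gh,ge,gd] [gi,gd,ga]"
proof -
  have "eqw [gh,ge,gd] [gh,gb,ga]" by (rule eqw_right) (simp add: defrel_def)
  also have "eqw \<dots> [gi,gd,ga]" by (rule eqw_left) (simp add: defrel_def)
  finally show ?thesis .
qed

lemma eqw_nea_oid_pkd: "eqw [gn,ge,ga] [go,gi,gd]" "eqw [gn,ge,ga] [gp,gk,gd]"
proof -
  have "eqw [gn,ge,ga] [gn,gf,gb]" by (rule eqw_right) (simp add: defrel_def)
  also have "eqw \<dots> [go,gh,gb]" by (rule eqw_left) (simp add: defrel_def)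
  also have "eqw \<dots> [go,gi,gd]" by (rule eqw_right) (simp add: defrel_def)
  finally show oid: "eqw [gn,ge,ga] [go,gi,gd]" .
  have "eqw [go,gi,gd] [gp,gk,gd]" by (rule eqw_left) (simp add: defrel_def)
  with oid show "eqw [gn,ge,ga] [gp,gk,gd]" by (rule eqw_trans)
qed

lemma eqw_led_ejb_phb: "eqw [gl,ge,gd] [ge,gj,gb]" "eqw [gl,ge,gd] [gp,gh,gb]"
proof -
  have "eqw [gl,ge,gd] [ge,gk,gd]" by (rule eqw_left) (simp add: defrel_def)
  also have "eqw \<dots> [ge,gj,gb]" by (rule eqw_right) (simp add: defrel_def)
  finally show ejb: "eqw [gl,ge,gd] [ge,gj,gb]" .
  have "eqw [ge,gj,gb] [gp,gh,gb]" by (rule eqw_left) (simp add: defrel_def)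
  with ejb show "eqw [gl,ge,gd] [gp,gh,gb]" by (rule eqw_trans)
qed

lemma eqw_lba_ejb_phb: "eqw [gl,gb,ga] [ge,gj,gb]" "eqw [gl,gb,ga] [gp,gh,gb]"
proof -
  have "eqw [gl,gb,ga] [gl,ge,gd]" by (rule eqw_right) (simp add: defrel_def)
  then show "eqw [gl,gb,ga] [ge,gj,gb]" "eqw [gl,gb,ga] [gp,gh,gb]"
    using eqw_led_ejb_phb by (blast intro: eqw_trans)+
qed

lemma eqw_eka_pia_lfb: "eqw [ge,gk,ga] [gl,gf,gb]" "eqw [gp,gi,ga] [gl,gf,gb]"
proof -
  have "eqw [ge,gk,ga] [gl,ge,ga]" by (rule eqw_left) (simp add: defrel_def)
  also have "eqw \<dots> [gl,gf,gb]" by (rule eqw_right) (simp add: defrel_def)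
  finally show lfb: "eqw [ge,gk,ga] [gl,gf,gb]" .
  have "eqw [gp,gi,ga] [ge,gk,ga]" by (rule eqw_left) (simp add: defrel_def)
  with lfb show "eqw [gp,gi,ga] [gl,gf,gb]" by (blast intro: eqw_trans)
qed

lemma cls_single_inj: "cls [y] = cls [y'] \<Longrightarrow> y = y'"
  using eqw_short[of "[y]" "[y']"] by (simp add: cls_eq_iff)

section \<open>Maximal chains of the partition posets\<close>

lemma Mle_suffix: "Mle (cls v) (cls (u @ v))"
  unfolding Mle_def isprod_def by blast

lemma Mless_cls_length: "Mless (cls u) (cls v) \<Longrightarrow> length u < length v"
proof -
  assume less: "Mless (cls u) (cls v)"
  then obtain u' v' where u: "cls u = cls v'" and v: "cls v = cls (u' @ v')"
    unfolding Mless_def Mle_def isprod_def by blast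
  have "u' \<noteq> []"
  proof
    assume "u' = []"
    with u v have "cls v = cls u" by simp
    with less show False unfolding Mless_def by simp
  qed
  with cls_length[OF u] cls_length[OF v] show ?thesis by simp
qed

lemma Pi_elem: "z \<in> Pi d \<Longrightarrow> \<exists>w. z = cls w \<and> length w \<le> d"
  unfolding Pi_def has_weight_def by blast

lemma cls_in_Pi:
  assumes "length w \<le> d"
  shows "cls w \<in> Pi d"
proof -
  have "has_weight (cls (replicate (d - length w) ga @ w)) d"
    using assms unfolding has_weight_def by fastforce
  moreover have "has_weight (cls w) (length w)"
    unfolding has_weight_def by blast
  ultimately show ?thesis
    unfolding Pi_def using Mle_suffix assms by blast
qed

lemma bot_in_Pi: "bot \<in> Pi d"
  unfolding bot_def by (rule cls_in_Pi) simp

lemma covers_Pi: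
  assumes "length v = Suc (length u)" "length v \<le> d" "Mle (cls u) (cls v)"
  shows "covers (Pi d) (cls u) (cls v)"
  unfolding covers_def
proof (intro conjI)
  show "cls u \<in> Pi d" "cls v \<in> Pi d" using assms(1,2) by (simp_all add: cls_in_Pi)
  show "Mless (cls u) (cls v)"
    using assms(1,3) cls_length[of u v] unfolding Mless_def by auto
  show "\<not> (\<exists>z\<in>Pi d. Mless (cls u) z \<and> Mless z (cls v))"
  proof
    assume "\<exists>z\<in>Pi d. Mless (cls u) z \<and> Mless z (cls v)"
    then obtain z where "z \<in> Pi d" "Mless (cls u) z" "Mless z (cls v)"
      by blast
    then obtain w where "Mless (cls u) (cls w)" "Mless (cls w) (cls v)"
      using Pi_elem by blast
    then have "length u < length w" "length w < length v"
      by (simp_all add: Mless_cls_length)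
    with assms(1) show False by simp
  qed
qed

lemma length_word_chain [simp]: "length (word_chain w) = Suc (length w)"
  by (simp add: word_chain_def)

lemma word_chain_nth: "q \<le> length w \<Longrightarrow> word_chain w ! q = cls (drop (length w - q) w)"
  by (simp add: word_chain_def nth_append del: upt_Suc)

lemma word_chain_not_Nil: "word_chain w \<noteq> []"
  by (simp add: word_chain_def)

lemma hd_word_chain: "hd (word_chain w) = bot"
  by (simp add: hd_conv_nth word_chain_not_Nil word_chain_nth bot_def)

lemma last_word_chain: "last (word_chain w) = cls w"
  by (simp add: last_conv_nth word_chain_not_Nil word_chain_nth)

lemma word_chain_covers:
  assumes "Suc q \<le> length w" "length w \<le> d"
  shows "covers (Pi d) (word_chain w ! q) (word_chain w ! Suc q)"
proof -
  have "drop (length w - Suc q) w = w ! (length w - Suc q) # drop (length w - q) w"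
    using assms(1) by (metis Cons_nth_drop_Suc Suc_diff_Suc diff_less less_eq_Suc_le zero_less_Suc order_less_le_trans)
  then show ?thesis
    using assms Mle_suffix[of "drop (length w - q) w" "[w ! (length w - Suc q)]"]
    by (auto simp: word_chain_nth intro!: covers_Pi)
qed

lemma cchain_word_chain:
  "length w \<le> d \<Longrightarrow> cchain (Pi d) bot (cls w) (word_chain w)"
  unfolding cchain_def
  by (simp add: word_chain_not_Nil hd_word_chain last_word_chain word_chain_covers)

lemma maxchain_word_chain:
  assumes "length w = d"
  shows "maxchain (Pi d) (word_chain w)"
  unfolding maxchain_def
proof (intro conjI)
  show "\<not> (\<exists>z\<in>Pi d. Mless z (hd (word_chain w)))"
    unfolding hd_word_chain bot_def by (auto dest!: Pi_elem Mless_cls_length)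
  show "\<not> (\<exists>z\<in>Pi d. Mless (last (word_chain w)) z)"
    unfolding last_word_chain using assms by (auto dest!: Pi_elem Mless_cls_length)
qed (use assms in \<open>simp_all add: word_chain_not_Nil hd_word_chain bot_in_Pi last_word_chain
                                      cls_in_Pi word_chain_covers\<close>)

section \<open>CL-labellings in rank two\<close>

lemma length_rlabs: "length (rlabs P L r c) = length c - 1"
  by (simp add: rlabs_def Let_def)

lemma rlabs_bot_nth:
  assumes "maxchain P c" "hd c = bot" "q < length c - 1"
  obtains m where "maxchain P m" "take (length c) m = c" "rlabs P L [bot] c ! q = L m q"
proof -
  have c: "c = bot # tl c" using assms(1,2) unfolding maxchain_def by (metis list.collapse)
  define m where "m = (SOME m. maxchain P m \<and> take (length c) m = bot # tl c)"
  have "maxchain P m \<and> take (length c) m = bot # tl c"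
    unfolding m_def by (rule someI[of _ c]) (use assms(1) c in simp)
  moreover have "rlabs P L [bot] c ! q = L m q"
    using assms(3) by (simp add: rlabs_def m_def)
  ultimately show ?thesis using that c by metis
qed

lemma rlabs_bot_first_label_eq:
  assumes "chain_edge_labelling P L" "maxchain P c" "maxchain P c'" "hd c = bot" "hd c' = bot"
    and "Suc 0 < length c" "Suc 0 < length c'" "c ! 1 = c' ! 1"
  shows "rlabs P L [bot] c ! 0 = rlabs P L [bot] c' ! 0"
proof -
  obtain m where m: "maxchain P m" "take (length c) m = c" "rlabs P L [bot] c ! 0 = L m 0"
    using rlabs_bot_nth[OF assms(2,4), of 0 L] assms(6) by (metis zero_less_diff One_nat_def)
  obtain m' where m': "maxchain P m'" "take (length c') m' = c'" "rlabs P L [bot] c' ! 0 = L m' 0"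
    using rlabs_bot_nth[OF assms(3,5), of 0 L] assms(7) by (metis zero_less_diff One_nat_def)
  have "take 2 m = take 2 c" "take 2 m' = take 2 c'"
    using m(2) m'(2) assms(6,7) by (metis Suc_leI numeral_2_eq_2 take_take min_absorb1)+
  moreover have "take 2 c = take 2 c'"
    using assms(4-8) by (cases c; cases c') (simp_all add: numeral_2_eq_2 take_Suc_conv_app_nth)
  moreover have "Suc 0 < length m" "Suc 0 < length m'"
    using m(2) m'(2) assms(6,7) by (metis length_take min.strict_boundedE)+
  ultimately have "L m 0 = L m' 0"
    using assms(1) m(1) m'(1) unfolding chain_edge_labelling_def numeral_2_eq_2 by metis
  with m(3) m'(3) show ?thesis by simp
qed

lemma word_chain_first_label_eq:
  assumes "chain_edge_labelling (Pi 2) L"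
  shows "rlabs (Pi 2) L [bot] (word_chain [x, y]) ! 0 = rlabs (Pi 2) L [bot] (word_chain [x', y]) ! 0"
  by (rule rlabs_bot_first_label_eq[OF assms maxchain_word_chain maxchain_word_chain])
    (simp_all add: hd_word_chain word_chain_nth)

lemma CL_labelling_first_label_less:
  fixes L :: "elem list \<Rightarrow> nat \<Rightarrow> 'l::order"
  assumes CL: "CL_labelling P L" and xy: "x \<in> P" "y \<in> P" "Mle x y" and r: "cchain P bot x r"
    and c: "cchain P x y c" "length c = 3" "increasing (rlabs P L r c)"
    and c': "cchain P x y c'" "length c' = 3" "c' \<noteq> c"
  shows "rlabs P L r c ! 0 < rlabs P L r c' ! 0"
proof -
  have unique: "\<exists>!c. cchain P x y c \<and> increasing (rlabs P L r c)"
    and lex_first: "lexless (rlabs P L r c) (rlabs P L r c')"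
    using CL xy r c c' unfolding CL_labelling_def by blast+
  have "length (rlabs P L r c) = Suc (Suc 0)" "length (rlabs P L r c') = Suc (Suc 0)"
    using c(2) c'(2) by (simp_all add: length_rlabs)
  then obtain s0 s1 t0 t1 where s: "rlabs P L r c = [s0, s1]" and t: "rlabs P L r c' = [t0, t1]"
    by (auto simp: length_Suc_conv)
  have "s0 < s1" using c(3) s by (simp add: increasing_def)
  from lex_first s t consider "s0 < t0" | "s0 = t0" "s1 < t1"
    by (auto simp: lexless_def less_Suc_eq numeral_2_eq_2)
  then show ?thesis
  proof cases
    case 2
    \<comment> \<open>then the labels of c' increase as well, against uniqueness of the increasing chain\<close>
    with \<open>s0 < s1\<close> have "increasing (rlabs P L r c')"
      using t by (auto simp: increasing_def intro: less_trans)
    with unique c c' show ?thesis by blast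
  qed (simp add: s t)
qed

definition normal_last_letter_least :: "(word \<times> word) set \<Rightarrow> (gen \<Rightarrow> 'l::order) \<Rightarrow> bool" where
  "normal_last_letter_least R F \<longleftrightarrow>
     (\<forall>x1 y1 x2 y2. eqw [x1, y1] [x2, y2] \<longrightarrow> y1 \<noteq> y2 \<longrightarrow> irreducible R [x1, y1] \<longrightarrow> F y1 < F y2)"

lemma normal_last_letter_leastD:
  assumes "normal_last_letter_least R F" "([x1, y1], [x2, y2]) \<in> defrel \<or> ([x2, y2], [x1, y1]) \<in> defrel"
    and "y1 \<noteq> y2" "irreducible R [x1, y1]"
  shows "F y1 < F y2"
  using assms eqw_defrel unfolding normal_last_letter_least_def by blast

lemma CL_PBW_normal_last_letter_least:
  fixes L :: "elem list \<Rightarrow> nat \<Rightarrow> 'l::order"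
  assumes CL: "CL_labelling (Pi 2) L"
    and PBW: "\<And>w. length w = 2 \<Longrightarrow> irreducible R w \<Longrightarrow> increasing (rlabs (Pi 2) L [bot] (word_chain w))"
  shows "normal_last_letter_least R (\<lambda>y. rlabs (Pi 2) L [bot] (word_chain [ga, y]) ! 0)"
  \<comment> \<open>the letter ga is arbitrary, the bottom label only depends on the last letter\<close>
  unfolding normal_last_letter_least_def
proof (intro allI impI)
  fix x1 y1 x2 y2
  assume eq: "eqw [x1, y1] [x2, y2]" and "y1 \<noteq> y2" and normal: "irreducible R [x1, y1]"
  have "cls [x2, y2] = cls [x1, y1]" using eq by (simp add: cls_eq_iff eqw_sym)
  then have chains: "cchain (Pi 2) bot (cls [x1, y1]) (word_chain [x2, y2])"
    "cchain (Pi 2) bot (cls [x1, y1]) (word_chain [x1, y1])"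
    using cchain_word_chain[of "[x2, y2]" 2] cchain_word_chain[of "[x1, y1]" 2] by simp_all
  have "word_chain [x2, y2] ! 1 \<noteq> word_chain [x1, y1] ! 1"
    using \<open>y1 \<noteq> y2\<close> by (auto simp: word_chain_nth dest: cls_single_inj)
  then have distinct: "word_chain [x2, y2] \<noteq> word_chain [x1, y1]" by metis
  have "rlabs (Pi 2) L [bot] (word_chain [x1, y1]) ! 0 < rlabs (Pi 2) L [bot] (word_chain [x2, y2]) ! 0"
    using CL_labelling_first_label_less[OF CL bot_in_Pi cls_in_Pi _ _ chains(2) _ PBW[OF _ normal]
        chains(1) _ distinct] Mle_suffix[of "[]" "[x1, y1]"]
    by (simp add: bot_def cchain_def)
  moreover have "chain_edge_labelling (Pi 2) L" using CL unfolding CL_labelling_def by blast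
  ultimately show "rlabs (Pi 2) L [bot] (word_chain [ga, y1]) ! 0
      < rlabs (Pi 2) L [bot] (word_chain [ga, y2]) ! 0"
    using word_chain_first_label_eq by metis
qed

section \<open>Normal forms of a convergent orientation\<close>

locale convergent_rewriting =
  fixes R :: "(word \<times> word) set"
  assumes convergent: "convergent_orientation R"
begin

lemma rule_shape: "\<forall>(l, r)\<in>R. length l = 2 \<and> length r = 2 \<and> l \<noteq> r \<and> eqw l r"
  using convergent unfolding convergent_orientation_def by (elim conjE)

lemma equivclp_rstep: "equivclp (rstep R) = eqw"
  using convergent unfolding convergent_orientation_def equivclp_def symclp_pointfree by (elim conjE)

lemma terminating: "wfP (rstep R)\<inverse>\<inverse>"
  using convergent unfolding convergent_orientation_def by (elim conjE)

lemma confluent: "confluentp (rstep R)"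
proof (rule confluentpI)
  have "\<forall>u v w. (rstep R)\<^sup>*\<^sup>* u v \<and> (rstep R)\<^sup>*\<^sup>* u w \<longrightarrow> joinable (rstep R) v w"
    using convergent unfolding convergent_orientation_def by (elim conjE)
  then show "joinable (rstep R) y z" if "(rstep R)\<^sup>*\<^sup>* x y" "(rstep R)\<^sup>*\<^sup>* x z" for x y z
    using that by blast
qed

lemma rule_lhs_length: "(l, r) \<in> R \<Longrightarrow> length l = 2"
  using rule_shape by blast

lemma rule_eqw: "(l, r) \<in> R \<Longrightarrow> eqw l r \<and> l \<noteq> r"
  using rule_shape by blast

lemma normal_form_exists: "\<exists>v. eqw w v \<and> irreducible R v"
proof -
  obtain v where "(rstep R)\<^sup>*\<^sup>* w v" "irreducible R v"
    using terminating_normal_form_exists[OF terminating] unfolding irreducible_def by blast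
  moreover from this(1) have "eqw w v"
    unfolding equivclp_rstep[symmetric] by (rule rtranclp_into_equivclp)
  ultimately show ?thesis by blast
qed

lemma normal_form_unique: "eqw u v \<Longrightarrow> irreducible R u \<Longrightarrow> irreducible R v \<Longrightarrow> u = v"
  by (rule confluent_normal_form_unique[OF confluent]) (simp_all add: equivclp_rstep irreducible_def)

lemma normal_form_in_closed_set:
  assumes "\<forall>u\<in>S. \<forall>v. (u, v) \<in> defrel \<or> (v, u) \<in> defrel \<longrightarrow> v \<in> S"
    and "\<forall>u\<in>S. length u = 2" "u \<in> S"
  shows "\<exists>v\<in>S. irreducible R v"
  using normal_form_exists[of u] eqw_closed_length2[of S u] assms by blast

lemma irreducible_if_unrelated:
  assumes "\<And>v. ([p, q], v) \<notin> defrel \<and> (v, [p, q]) \<notin> defrel"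
  shows "irreducible R [p, q]"
  unfolding irreducible_def
proof
  assume "\<exists>v. rstep R [p, q] v"
  then obtain v where "rstep R [p, q] v" ..
  then have "([p, q], v) \<in> R"
    by (rule rstep_whole_word[rotated]) (simp add: rule_lhs_length)
  then have "eqw [p, q] v" "v \<noteq> [p, q]"
    using rule_eqw by auto
  moreover from this(1) have "v \<in> {[p, q]}"
    by (rule eqw_closed_length2[rotated 3]) (use assms in auto)
  ultimately show False by simp
qed

lemma irreducible_factors_eq:
  assumes "eqw [x, y, z] [x', y', z']"
    and "irreducible R [x, y]" "irreducible R [y, z]" "irreducible R [x', y']" "irreducible R [y', z']"
  shows "[x, y, z] = [x', y', z']"
  using assms(1) irreducible_three_letters[OF rule_lhs_length assms(2,3)]
    irreducible_three_letters[OF rule_lhs_length assms(4,5)]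
  by (rule normal_form_unique)

lemma normal_forms_of_classes:
  "irreducible R [gb, ga] \<or> irreducible R [ge, gd]"
  "irreducible R [ge, ga] \<or> irreducible R [gf, gb]"
  "irreducible R [gh, gb] \<or> irreducible R [gi, gd]"
  "irreducible R [gj, gb] \<or> irreducible R [gk, gd]"
  "irreducible R [go, gi] \<or> irreducible R [gp, gk]"
  "irreducible R [ge, gj] \<or> irreducible R [gp, gh]"
  "irreducible R [gl, ge] \<or> irreducible R [ge, gk] \<or> irreducible R [gp, gi]"
  using normal_form_in_closed_set[of "{[gb, ga], [ge, gd]}" "[gb, ga]"]
    normal_form_in_closed_set[of "{[ge, ga], [gf, gb]}" "[ge, ga]"]
    normal_form_in_closed_set[of "{[gh, gb], [gi, gd]}" "[gh, gb]"]
    normal_form_in_closed_set[of "{[gj, gb], [gk, gd]}" "[gj, gb]"]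
    normal_form_in_closed_set[of "{[go, gi], [gp, gk]}" "[go, gi]"]
    normal_form_in_closed_set[of "{[ge, gj], [gp, gh]}" "[ge, gj]"]
    normal_form_in_closed_set[of "{[gl, ge], [ge, gk], [gp, gi]}" "[gl, ge]"]
  by (auto simp: defrel_def)

lemma unrelated_words_irreducible:
  "irreducible R [gd, ga]" "irreducible R [gh, ge]" "irreducible R [gi, ga]" "irreducible R [gk, ga]"
  "irreducible R [gl, gb]" "irreducible R [gl, gf]" "irreducible R [gn, ge]"
  by (rule irreducible_if_unrelated; simp add: defrel_def)+

lemma normal_last_letter_least_hb_imp_jb:
  assumes F: "normal_last_letter_least R F" and hb: "irreducible R [gh, gb]"
  shows "irreducible R [gj, gb]"
proof -
  note less = normal_last_letter_leastD[OF F]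
  have "F gb < F gd" using less[of gh gb gi gd] hb by (simp add: defrel_def)
  then show ?thesis
    using normal_forms_of_classes(4) less[of gk gd gj gb] by (auto simp: defrel_def)
qed

lemma normal_last_letter_least_hb_imp_ba:
  assumes F: "normal_last_letter_least R F" and hb: "irreducible R [gh, gb]"
  shows "irreducible R [gb, ga]"
proof (rule ccontr)
  assume "\<not> irreducible R [gb, ga]"
  then have ed: "irreducible R [ge, gd]" using normal_forms_of_classes(1) by blast
  note less = normal_last_letter_leastD[OF F]
  have "F gb < F gd" using less[of gh gb gi gd] hb by (simp add: defrel_def)
  moreover have "F gd < F ga" using less[of ge gd gb ga] ed by (simp add: defrel_def)
  ultimately have fb: "irreducible R [gf, gb]"
    using normal_forms_of_classes(2) less[of ge ga gf gb] by (auto simp: defrel_def dest: less_trans)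
  note jb = normal_last_letter_least_hb_imp_jb[OF F hb]
  consider "irreducible R [gl, ge]" | "irreducible R [ge, gk]" | "irreducible R [gp, gi]"
    using normal_forms_of_classes(7) by blast
  then show False
  proof cases
    case 1
    with normal_forms_of_classes(6) show False
      using irreducible_factors_eq[OF eqw_led_ejb_phb(1) 1 ed _ jb]
        irreducible_factors_eq[OF eqw_led_ejb_phb(2) 1 ed _ hb]
      by auto
  next
    case 2
    then show False
      using irreducible_factors_eq[OF eqw_eka_pia_lfb(1) 2 unrelated_words_irreducible(4)
          unrelated_words_irreducible(6) fb]
      by simp
  next
    case 3
    then show False
      using irreducible_factors_eq[OF eqw_eka_pia_lfb(2) 3 unrelated_words_irreducible(3)
          unrelated_words_irreducible(6) fb]
      by simp
  qed
qed

lemma normal_last_letter_least_reducible_hb: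
  assumes F: "normal_last_letter_least R F"
  shows "\<not> irreducible R [gh, gb]"
proof
  assume hb: "irreducible R [gh, gb]"
  note ba = normal_last_letter_least_hb_imp_ba[OF F hb]
    and jb = normal_last_letter_least_hb_imp_jb[OF F hb]
  with normal_forms_of_classes(6) show False
    using irreducible_factors_eq[OF eqw_lba_ejb_phb(1) unrelated_words_irreducible(5) ba _ jb]
      irreducible_factors_eq[OF eqw_lba_ejb_phb(2) unrelated_words_irreducible(5) ba _ hb]
    by auto
qed

lemma normal_last_letter_least_reducible_id:
  assumes F: "normal_last_letter_least R F"
  shows "\<not> irreducible R [gi, gd]"
proof
  assume id: "irreducible R [gi, gd]"
  note less = normal_last_letter_leastD[OF F]
  have "F gd < F gb" using less[of gi gd gh gb] id by (simp add: defrel_def)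
  have kd: "irreducible R [gk, gd]"
    using normal_forms_of_classes(4) less[of gj gb gk gd] \<open>F gd < F gb\<close>
    by (auto simp: defrel_def)
  have "\<not> irreducible R [ge, gd]"
    using irreducible_factors_eq[OF eqw_hed_ida unrelated_words_irreducible(2) _ id
        unrelated_words_irreducible(1)]
    by auto
  then have "irreducible R [gb, ga]" using normal_forms_of_classes(1) by blast
  then have "F ga < F gd" using less[of gb ga ge gd] by (simp add: defrel_def)
  have ea: "irreducible R [ge, ga]"
    using normal_forms_of_classes(2) less[of gf gb ge ga] \<open>F ga < F gd\<close> \<open>F gd < F gb\<close>
    by (auto simp: defrel_def dest: less_trans)
  show False
    using normal_forms_of_classes(5)
      irreducible_factors_eq[OF eqw_nea_oid_pkd(1) unrelated_words_irreducible(7) ea _ id]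
      irreducible_factors_eq[OF eqw_nea_oid_pkd(2) unrelated_words_irreducible(7) ea _ kd]
    by auto
qed

lemma no_normal_last_letter_least: "\<not> normal_last_letter_least R F"
  using normal_forms_of_classes(3) normal_last_letter_least_reducible_hb
    normal_last_letter_least_reducible_id by blast

end

section \<open>A convergent orientation\<close>

definition oriented_defrel :: "(word \<times> word) set" where
  "oriented_defrel = {([ge,gd],[gb,ga]), ([gf,gb],[ge,ga]), ([gi,gd],[gh,gb]), ([gj,gb],[gk,gd]),
     ([gp,gk],[go,gi]), ([gp,gh],[ge,gj]), ([ge,gk],[gl,ge]), ([gp,gi],[gl,ge]), ([go,gh],[gn,gf]),
     ([gp,gj],[gn,gf])}"

lemma oriented_defrel_rules_eqw:
  assumes "(l, r) \<in> oriented_defrel"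
  shows "eqw l r"
proof -
  have "eqw [gp,gi] [gl,ge]" "eqw [gp,gj] [gn,gf]"
    using eqw_trans[OF eqw_defrel eqw_defrel, of "[gp,gi]" "[ge,gk]" "[gl,ge]"]
      eqw_trans[OF eqw_defrel eqw_defrel, of "[gp,gj]" "[go,gh]" "[gn,gf]"]
    by (simp_all add: defrel_def)
  moreover have "(l, r) \<in> defrel \<or> (r, l) \<in> defrel \<or>
      (l, r) = ([gp,gi], [gl,ge]) \<or> (l, r) = ([gp,gj], [gn,gf])"
    using assms unfolding oriented_defrel_def by (elim insertE emptyE) (simp_all add: defrel_def)
  ultimately show ?thesis using eqw_defrel by blast
qed

lemma defrel_rules_oriented_equivclp:
  assumes "(l, r) \<in> defrel"
  shows "equivclp (rstep oriented_defrel) l r"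
proof -
  have step: "equivclp (rstep oriented_defrel) l r"
    if "(l, r) \<in> oriented_defrel \<or> (r, l) \<in> oriented_defrel" for l r
    using that by (blast intro: rstep_rule)
  have "equivclp (rstep oriented_defrel) [ge,gk] [gp,gi]" "equivclp (rstep oriented_defrel) [go,gh] [gp,gj]"
    using equivclp_trans[OF step step, of "[ge,gk]" "[gl,ge]" "[gp,gi]"]
      equivclp_trans[OF step step, of "[go,gh]" "[gn,gf]" "[gp,gj]"]
    by (simp_all add: oriented_defrel_def)
  moreover have "(l, r) \<in> oriented_defrel \<or> (r, l) \<in> oriented_defrel \<or>
      (l, r) = ([ge,gk], [gp,gi]) \<or> (l, r) = ([go,gh], [gp,gj])"
    using assms unfolding defrel_def by (elim insertE emptyE) (simp_all add: oriented_defrel_def)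
  ultimately show ?thesis using step by blast
qed

lemma equivclp_oriented_defrel: "equivclp (rstep oriented_defrel) = eqw"
proof (intro ext iffI)
  show "equivclp (rstep oriented_defrel) u v \<Longrightarrow> eqw u v" for u v
    unfolding eqw_equivclp
    by (rule equivclp_rstep_mono[OF oriented_defrel_rules_eqw[unfolded eqw_equivclp]])
  show "eqw u v \<Longrightarrow> equivclp (rstep oriented_defrel) u v" for u v
    unfolding eqw_equivclp by (rule equivclp_rstep_mono[OF defrel_rules_oriented_equivclp])
qed

fun weight :: "gen \<Rightarrow> nat" where
  "weight ga = 0" | "weight gb = 1" | "weight gd = 1" | "weight ge = 1" | "weight gf = 1"
| "weight gh = 1" | "weight gi = 2" | "weight gj = 2" | "weight gk = 1" | "weight gl = 0"
| "weight gn = 0" | "weight go = 1" | "weight gp = 3"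

lemma oriented_defrel_terminating: "wfP (rstep oriented_defrel)\<inverse>\<inverse>"
  by (rule rstep_terminating_by_weight[of _ weight]) (auto simp: oriented_defrel_def)

lemma oriented_defrel_overlaps_joinable:
  assumes "([p, q], r1) \<in> oriented_defrel" "([q, s], r2) \<in> oriented_defrel"
  shows "joinable (rstep oriented_defrel) (r1 @ [s]) (p # r2)"
proof -
  have "(p, q, s, r1, r2) = (gp, gi, gd, [gl,ge], [gh,gb]) \<or> (p, q, s, r1, r2) = (gp, gj, gb, [gn,gf], [gk,gd])"
    using assms unfolding oriented_defrel_def by (elim insertE emptyE; simp)
  moreover have "joinable (rstep oriented_defrel) [gl,ge,gd] [gp,gh,gb]"
  proof -
    have "rstep oriented_defrel [gl,ge,gd] [gl,gb,ga]" "rstep oriented_defrel [gp,gh,gb] [ge,gj,gb]"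
      "rstep oriented_defrel [ge,gj,gb] [ge,gk,gd]" "rstep oriented_defrel [ge,gk,gd] [gl,ge,gd]"
      by (rule rstep_left_pair rstep_right_pair, simp add: oriented_defrel_def)+
    then show ?thesis by (meson converse_rtranclp_into_rtranclp rtranclp.rtrancl_refl)
  qed
  moreover have "joinable (rstep oriented_defrel) [gn,gf,gb] [gp,gk,gd]"
  proof -
    have "rstep oriented_defrel [gn,gf,gb] [gn,ge,ga]" "rstep oriented_defrel [gp,gk,gd] [go,gi,gd]"
      "rstep oriented_defrel [go,gi,gd] [go,gh,gb]" "rstep oriented_defrel [go,gh,gb] [gn,gf,gb]"
      by (rule rstep_left_pair rstep_right_pair, simp add: oriented_defrel_def)+
    then show ?thesis by (meson converse_rtranclp_into_rtranclp rtranclp.rtrancl_refl)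
  qed
  ultimately show ?thesis by auto
qed

lemma oriented_defrel_confluent: "confluentp (rstep oriented_defrel)"
proof (rule newman[OF oriented_defrel_terminating])
  show "joinable (rstep oriented_defrel) v w"
    if "rstep oriented_defrel u v" "rstep oriented_defrel u w" for u v w
  proof (rule critical_pair_lemma_length2[OF _ _ oriented_defrel_overlaps_joinable that])
    show "length l = 2" if "(l, r) \<in> oriented_defrel" for l r
      using that unfolding oriented_defrel_def by (elim insertE emptyE; simp)
    show "joinable (rstep oriented_defrel) r1 r2"
      if "(l, r1) \<in> oriented_defrel" "(l, r2) \<in> oriented_defrel" for l r1 r2
    proof -
      have "r1 = r2" using that unfolding oriented_defrel_def by (elim insertE emptyE; simp)
      then show ?thesis by blast
    qed
  qed
qed

theorem convergent_orientation_oriented_defrel: "convergent_orientation oriented_defrel"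
  unfolding convergent_orientation_def
proof (intro conjI)
  have "\<forall>(l, r)\<in>oriented_defrel. length l = 2 \<and> length r = 2 \<and> l \<noteq> r"
    by (simp add: oriented_defrel_def)
  then show "\<forall>(l, r)\<in>oriented_defrel. length l = 2 \<and> length r = 2 \<and> l \<noteq> r \<and> eqw l r"
    using oriented_defrel_rules_eqw by blast
  show "(sup (rstep oriented_defrel) (rstep oriented_defrel)\<inverse>\<inverse>)\<^sup>*\<^sup>* = eqw"
    using equivclp_oriented_defrel unfolding equivclp_def symclp_pointfree .
  show "wfP (rstep oriented_defrel)\<inverse>\<inverse>" by (rule oriented_defrel_terminating)
  show "\<forall>u v w. (rstep oriented_defrel)\<^sup>*\<^sup>* u v \<and> (rstep oriented_defrel)\<^sup>*\<^sup>* u w \<longrightarrow>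
      joinable (rstep oriented_defrel) v w"
    using oriented_defrel_confluent confluentpD by metis
qed

theorem mainTheorem12:
  shows "(\<exists>R. convergent_orientation R) \<and>
    (\<forall>R. convergent_orientation R \<longrightarrow>
       \<not> (\<exists>lab :: nat \<Rightarrow> elem list \<Rightarrow> nat \<Rightarrow> 'l::order.
             (\<forall>dd. CL_labelling (Pi dd) (lab dd)) \<and> compatible_isos lab \<and>
             minimal_chains_PBW R lab))"
proof (intro conjI allI impI notI)
  show "\<exists>R. convergent_orientation R"
    using convergent_orientation_oriented_defrel ..
next
  fix R
  assume "convergent_orientation R"
  then interpret convergent_rewriting R by unfold_locales
  assume "\<exists>lab :: nat \<Rightarrow> elem list \<Rightarrow> nat \<Rightarrow> 'l::order.
             (\<forall>dd. CL_labelling (Pi dd) (lab dd)) \<and> compatible_isos lab \<and>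
             minimal_chains_PBW R lab"
  then obtain lab :: "nat \<Rightarrow> elem list \<Rightarrow> nat \<Rightarrow> 'l"
    where CL: "CL_labelling (Pi 2) (lab 2)" and PBW: "minimal_chains_PBW R lab"
    by blast
  have "normal_last_letter_least R (\<lambda>y. rlabs (Pi 2) (lab 2) [bot] (word_chain [ga, y]) ! 0)"
    using CL_PBW_normal_last_letter_least[OF CL] PBW unfolding minimal_chains_PBW_def by blast
  with no_normal_last_letter_least show False by blast
qed

end
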